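(* Under the three-receiver coding module below, at the beginning of any slot $t>0$, at least one receiver has decoded all of the packets $\mathbf{p}_1,\dots,\mathbf{p}_{m(t)}$, where $m(t)$ is the maximum rank among the three receivers at the beginning of slot $t$.
   Context: A sender broadcasts packets $\mathbf{p}_1,\mathbf{p}_2,\dots$ (indexed by arrival order, vectors over $\mathbb{F}_3$) to three receivers $1,2,3$ over a slotted erasure broadcast channel; each slot it transmits at most one linear combination of arrived packets, each receiver either receives it or suffers an erasure, and perfect feedback gives the sender every receiver's knowledge. The rank of a receiver is the dimension of the space of linear combinations it knows. Receiver $i$ has heard of a packet if it knows some linear combination involving that packet (with nonzero coefficient); $H_i$ is the set of packets it has heard of and $D_i$ the set it has decoded. "Oldest" means smallest index. Coding module: labels $L,N,D$ form a permutation of $\{1,2,3\}$; initially $L=1,N=2,D=3,m=0$. Each slot: let $U=\{\mathbf{p}_1,\dots,\mathbf{p}_m\}$ together with $\mathbf{p}_{m+1}$ if it has arrived, and set $S_1=D_N\cap D_D$, $S_2=D_N\cap(H_D\setminus D_D)$, $S_3=D_N\setminus H_D$, $S_4=D_D\setminus D_N$, $S_5=(H_D\setminus D_D)\setminus D_N$, $S_6=U\setminus(H_D\cup D_N)$. Transmit: Case 1 ($\mathbf{p}_{m+1}$ not arrived): if $S_2,S_4$ both nonempty send the sum of their oldest packets; else if $S_3,S_4$ both nonempty send the sum of their oldest packets; else send the oldest packet of the first nonempty set among $S_5,S_6,S_2,S_3,S_4$; if all are empty send nothing. Case 2 ($\mathbf{p}_{m+1}\in S_1$): send $\mathbf{p}_{m+1}$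 plus whatever Case 1 would send. Case 3 ($\mathbf{p}_{m+1}\in S_2$): send $\mathbf{p}_{m+1}+c\mathbf{p}$ with $\mathbf{p}$ the oldest packet of the first nonempty set among $S_4,S_5,S_6$, where $c=1$ unless $\mathbf{p}\in S_5$, in which case $c\in\{1,2\}$ is chosen so that the combination is innovative to receiver $D$. Case 4 ($\mathbf{p}_{m+1}\in S_3$): send $\mathbf{p}_{m+1}+\mathbf{p}$, $\mathbf{p}$ the oldest packet of the first nonempty set among $S_4,S_5,S_6$. Case 5 ($\mathbf{p}_{m+1}\in S_4$): send $\mathbf{p}_{m+1}+\mathbf{p}$, $\mathbf{p}$ the oldest packet of the first nonempty set among $S_2,S_3,S_6$. (In Cases 3–5, if all listed sets are empty, $\mathbf{p}_{m+1}$ is sent alone.) Case 6 (otherwise): send $\mathbf{p}_{m+1}$. After feedback, update $H_i,D_i$, set $m$ to the maximum rank of the three receivers; among receivers that have decoded all of $\mathbf{p}_1,\dots,\mathbf{p}_m$, label the one with lowest index $L$ (if there is none, assign labels arbitrarily); of the other two receivers, if exactly one has nonempty unsolved set $H_i\setminus D_i$, label it $D$ and the other $N$; otherwise assign $D,N$ arbitrarily. *)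

theory Defs
  imports Complex_Main "HOL-Library.Function_Algebras"
begin

text \<open>A linear combination of packets is represented by its coefficient vector
  indexed by nat: coordinate j is the coefficient of packet p_j (j \<ge> 1).\<close>

type_synonym 'f cvec = "nat \<Rightarrow> 'f"

text \<open>Receivers are 1, 2, 3. A knowledge state K assigns to each receiver the
  set of coefficient vectors it has received; a label triple is (L, N, D).\<close>

type_synonym 'f kstate = "nat \<Rightarrow> 'f cvec set"
type_synonym labels = "nat \<times> nat \<times> nat"

definition sc :: "'f::field \<Rightarrow> 'f cvec \<Rightarrow> 'f cvec" where
  "sc c v = (\<lambda>j. c * v j)"

definition unitv :: "nat \<Rightarrow> 'f::field cvec" where
  "unitv j = (\<lambda>k. if k = j then 1 else 0)"

definition knows :: "'f::field kstate \<Rightarrow> nat \<Rightarrow> 'f cvec set" where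
  "knows K i = module.span sc (K i)"

definition rank :: "'f::field kstate \<Rightarrow> nat \<Rightarrow> nat" where
  "rank K i = vector_space.dim sc (knows K i)"

definition heard :: "'f::field kstate \<Rightarrow> nat \<Rightarrow> nat set" where
  "heard K i = {j. \<exists>v\<in>knows K i. v j \<noteq> 0}"

definition decoded :: "'f::field kstate \<Rightarrow> nat \<Rightarrow> nat set" where
  "decoded K i = {j. unitv j \<in> knows K i}"

definition unsolved :: "'f::field kstate \<Rightarrow> nat \<Rightarrow> nat set" where
  "unsolved K i = heard K i - decoded K i"

definition maxrank :: "'f::field kstate \<Rightarrow> nat" where
  "maxrank K = Max {rank K 1, rank K 2, rank K 3}"

definition oldest :: "nat set \<Rightarrow> nat" where
  "oldest S = (LEAST j. j \<in> S)"

fun firstne :: "nat set list \<Rightarrow> nat set option" where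
  "firstne [] = None"
| "firstne (S # Ss) = (if S \<noteq> {} then Some S else firstne Ss)"

text \<open>Case 1 transmission (None = send nothing).\<close>
definition case1_tx :: "nat set \<Rightarrow> nat set \<Rightarrow> nat set \<Rightarrow> nat set \<Rightarrow> nat set \<Rightarrow> 'f::field cvec option" where
  "case1_tx S2 S3 S4 S5 S6 =
    (if S2 \<noteq> {} \<and> S4 \<noteq> {} then Some (unitv (oldest S2) + unitv (oldest S4))
     else if S3 \<noteq> {} \<and> S4 \<noteq> {} then Some (unitv (oldest S3) + unitv (oldest S4))
     else (case firstne [S5, S6, S2, S3, S4] of
             None \<Rightarrow> None
           | Some S \<Rightarrow> Some (unitv (oldest S))))"

text \<open>Set of transmissions allowed by the coding module in a slot, given the
  knowledge state K, the labels (L,N,D), and the number A of packets arrived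
  so far (packets p_1..p_A have arrived). It is a set only because of the
  choice of c in Case 3 (if both c = 1, 2 are innovative).\<close>
definition tx_choices :: "'f::field kstate \<Rightarrow> labels \<Rightarrow> nat \<Rightarrow> 'f cvec option set" where
  "tx_choices K lab A =
    (case lab of (l, n, d) \<Rightarrow>
     let m = maxrank K;
         DN = decoded K n; DD = decoded K d; HD = heard K d;
         U = {1..m} \<union> (if m + 1 \<le> A then {m + 1} else {});
         S1 = DN \<inter> DD;
         S2 = DN \<inter> (HD - DD);
         S3 = DN - HD;
         S4 = DD - DN;
         S5 = (HD - DD) - DN;
         S6 = U - (HD \<union> DN);
         q = m + 1;
         P = (unitv q :: 'f cvec);
         c1 = case1_tx S2 S3 S4 S5 S6
     in if \<not> (q \<le> A) then {c1}
        else if q \<in> S1 then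
          {Some (case c1 of None \<Rightarrow> P | Some v \<Rightarrow> P + v)}
        else if q \<in> S2 then
          (case firstne [S4, S5, S6] of
             None \<Rightarrow> {Some P}
           | Some S \<Rightarrow>
               (let p = oldest S;
                    innov = (\<lambda>c::'f. P + sc c (unitv p) \<notin> knows K d)
                in if p \<in> S5 then
                     {Some (P + sc c (unitv p)) | c. c \<in> {1, 2} \<and>
                        (innov c \<or> \<not> (\<exists>c'\<in>{1, 2}. innov c'))}
                   else {Some (P + unitv p)}))
        else if q \<in> S3 then
          (case firstne [S4, S5, S6] of
             None \<Rightarrow> {Some P}
           | Some S \<Rightarrow> {Some (P + unitv (oldest S))})
        else if q \<in> S4 then
          (case firstne [S2, S3, S6] of
             None \<Rightarrow> {Some P}
           | Some S \<Rightarrow> {Some (P + unitv (oldest S))})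
        else {Some P})"

definition valid_labels :: "'f::field kstate \<Rightarrow> labels \<Rightarrow> bool" where
  "valid_labels K lab =
    (case lab of (l, n, d) \<Rightarrow>
      {l, n, d} = {1, 2, 3} \<and>
      (let C = {i \<in> {1, 2, 3}. {1..maxrank K} \<subseteq> decoded K i} in
        C \<noteq> {} \<longrightarrow>
          l = Min C \<and>
          ((unsolved K n = {}) \<noteq> (unsolved K d = {}) \<longrightarrow> unsolved K d \<noteq> {})))"

text \<open>One slot: A = number of packets arrived, rcv i = receiver i receives
  (no erasure). State = (knowledge, labels) at the beginning of the slot.\<close>
definition step :: "nat \<Rightarrow> (nat \<Rightarrow> bool) \<Rightarrow> 'f::field kstate \<times> labels \<Rightarrow> 'f kstate \<times> labels \<Rightarrow> bool" where
  "step A rcv st st' =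
    (\<exists>x \<in> tx_choices (fst st) (snd st) A.
       fst st' = (\<lambda>i. if rcv i then fst st i \<union> set_option x else fst st i) \<and>
       valid_labels (fst st') (snd st'))"

end

theory Submission
  imports Defs
begin

text \<open>Let m be the maximum rank. Inductively, every received combination lies in the span of the
  first m + 1 unit vectors. Then every transmitted combination involves only packets among the first
  m + 1 (the new packet p_(m+1), packets heard by N or D, and packets of U), so this persists after the
  slot. Ranks never drop and cannot exceed m + 1, so the new maximum rank is either still m, and the
  receiver that had decoded p_1, ..., p_m still has, or it is m + 1, and a receiver of that rank
  knows the whole (m + 1)-dimensional space, i.e. it has decoded p_1, ..., p_(m+1).\<close>

interpretation V: vector_space "sc :: 'f::field \<Rightarrow> 'f cvec \<Rightarrow> 'f cvec"
  by unfold_locales (auto simp: sc_def fun_eq_iff algebra_simps)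

context vector_space
begin

lemma dim_mono_finite_span:
  assumes "A \<subseteq> B" "B \<subseteq> span W" "finite W"
  shows "dim A \<le> dim B"
proof -
  obtain C where C: "C \<subseteq> B" "independent C" "B \<subseteq> span C" "card C = dim B"
    by (rule basis_exists)
  have "finite C"
    using independent_span_bound[OF \<open>finite W\<close> \<open>independent C\<close>] C(1) assms(2) by blast
  then show ?thesis
    using dim_le_card[of A C] assms(1) C by auto
qed

lemma subset_span_if_card_le_dim:
  assumes "A \<subseteq> span W" "finite W" "card W \<le> dim A"
  shows "W \<subseteq> span A"
proof
  fix w assume "w \<in> W"
  show "w \<in> span A"
  proof (rule ccontr)
    assume "w \<notin> span A"
    obtain C where C: "C \<subseteq> A" "independent C" "A \<subseteq> span C" "card C = dim A"
      by (rule basis_exists)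
    have "w \<notin> span C"
      using \<open>w \<notin> span A\<close> span_mono[OF C(1)] by blast
    have "independent (insert w C)"
      using independent_insertI[OF \<open>w \<notin> span C\<close> C(2)] .
    moreover have "insert w C \<subseteq> span W"
      using \<open>w \<in> W\<close> C(1) assms(1) span_base by blast
    ultimately have "finite (insert w C) \<and> card (insert w C) \<le> card W"
      by (rule independent_span_bound[OF assms(2)])
    moreover have "w \<notin> C"
      using \<open>w \<notin> span C\<close> span_base by blast
    ultimately have "Suc (dim A) \<le> card W"
      using C(4) by (auto simp: card_insert_if)
    with assms(3) show False
      by simp
  qed
qed

end

lemma decoded_subset_heard: "decoded K i \<subseteq> heard K i"
  unfolding decoded_def heard_def by (force simp: unitv_def)

lemma oldest_mem: "S \<noteq> {} \<Longrightarrow> oldest S \<in> S"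
  unfolding oldest_def by (metis LeastI ex_in_conv)

lemma firstne_SomeD: "firstne Ss = Some S \<Longrightarrow> S \<in> set Ss \<and> S \<noteq> {}"
  by (induction Ss) (auto split: if_splits)

lemma unitv_in_span: "j \<in> I \<Longrightarrow> unitv j \<in> V.span (unitv ` I)"
  by (rule V.span_base) blast

lemma oldest_firstne_mem: "firstne Ss = Some S \<Longrightarrow> oldest S \<in> \<Union>(set Ss)"
  using firstne_SomeD oldest_mem by blast

lemma unitv_oldest_firstne_in_span:
  "firstne Ss = Some S \<Longrightarrow> \<Union>(set Ss) \<subseteq> I \<Longrightarrow> unitv (oldest S) \<in> V.span (unitv ` I)"
  using oldest_firstne_mem unitv_in_span by blast

lemma case1_tx_in_span:
  "case1_tx S2 S3 S4 S5 S6 = Some v \<Longrightarrow> v \<in> V.span (unitv ` (S2 \<union> S3 \<union> S4 \<union> S5 \<union> S6))"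
  unfolding case1_tx_def
  by (auto simp del: firstne.simps split: if_splits option.splits
      intro!: V.span_add unitv_in_span dest!: oldest_firstne_mem oldest_mem)

lemma tx_choices_in_span:
  fixes K :: "'f::field kstate"
  assumes "Some v \<in> tx_choices K (l, n, d) A"
  shows "v \<in> V.span (unitv ` ({1..maxrank K + 1} \<union> heard K n \<union> heard K d))"
    (is "_ \<in> ?W")
proof -
  define U where "U = {1..maxrank K} \<union> (if maxrank K + 1 \<le> A then {maxrank K + 1} else {})"
  define S2 where "S2 = decoded K n \<inter> (heard K d - decoded K d)"
  define S3 where "S3 = decoded K n - heard K d"
  define S4 where "S4 = decoded K d - decoded K n"
  define S5 where "S5 = heard K d - decoded K d - decoded K n"
  define S6 where "S6 = U - (heard K d \<union> decoded K n)"
  have sets: "S2 \<union> S3 \<union> S4 \<union> S5 \<union> S6 \<subseteq> {1..maxrank K + 1} \<union> heard K n \<union> heard K d"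
    using decoded_subset_heard[of K n] decoded_subset_heard[of K d]
    unfolding S2_def S3_def S4_def S5_def S6_def U_def by auto
  have new: "unitv (maxrank K + 1) \<in> ?W"
    by (rule unitv_in_span) simp
  have case1: "w \<in> ?W" if "case1_tx S2 S3 S4 S5 S6 = Some w" for w :: "'f cvec"
    using case1_tx_in_span[OF that] V.span_mono[of "unitv ` (S2 \<union> S3 \<union> S4 \<union> S5 \<union> S6)"] sets
    by (meson image_mono subsetD)
  have first: "unitv (oldest S) \<in> ?W"
    if "firstne Ss = Some S" "set Ss \<subseteq> {S2, S3, S4, S5, S6}" for Ss S
    using that sets by (intro unitv_oldest_firstne_in_span) blast+
  show ?thesis
    using assms
    unfolding tx_choices_def Let_def prod.case
    \<comment> \<open>folding the sets back keeps the case split of auto small\<close>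
    unfolding U_def[symmetric] S2_def[symmetric] S3_def[symmetric] S4_def[symmetric]
      S5_def[symmetric] S6_def[symmetric]
    by (auto simp del: firstne.simps split: if_splits option.splits
        intro!: V.span_add V.span_scale new[simplified] intro: case1[simplified] first[simplified])
qed

lemma decoded_mono: "K i \<subseteq> K' i \<Longrightarrow> decoded K i \<subseteq> decoded K' i"
  unfolding decoded_def knows_def using V.span_mono by blast

lemma maxrank_attained: "\<exists>i\<in>{1, 2, 3}. rank K i = maxrank K"
  unfolding maxrank_def by (auto simp: max_def)

lemma rank_le_maxrank: "i \<in> {1, 2, 3} \<Longrightarrow> rank K i \<le> maxrank K"
  unfolding maxrank_def by auto

definition prefix_span :: "nat \<Rightarrow> 'f::field cvec set" where
  "prefix_span k = V.span (unitv ` {1..k})"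

lemma prefix_span_support: "v \<in> prefix_span k \<Longrightarrow> v j \<noteq> 0 \<Longrightarrow> j \<in> {1..k}"
proof -
  have "V.subspace {v. \<forall>j. j \<notin> {1..k} \<longrightarrow> v j = 0}"
    unfolding V.subspace_def sc_def by simp
  then have "prefix_span k \<subseteq> {v. \<forall>j. j \<notin> {1..k} \<longrightarrow> v j = 0}"
    unfolding prefix_span_def by (rule V.span_minimal[rotated]) (auto simp: unitv_def)
  then show "v \<in> prefix_span k \<Longrightarrow> v j \<noteq> 0 \<Longrightarrow> j \<in> {1..k}"
    by blast
qed

lemma prefix_span_mono: "k \<le> k' \<Longrightarrow> prefix_span k \<subseteq> prefix_span k'"
  unfolding prefix_span_def by (rule V.span_mono) auto

lemma knows_subset_prefix_span: "K i \<subseteq> prefix_span k \<Longrightarrow> knows K i \<subseteq> prefix_span k"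
  unfolding knows_def prefix_span_def by (rule V.span_minimal) auto

lemma heard_subset_if_prefix_span: "K i \<subseteq> prefix_span k \<Longrightarrow> heard K i \<subseteq> {1..k}"
  using knows_subset_prefix_span prefix_span_support unfolding heard_def by blast

lemma rank_le_if_prefix_span:
  fixes K :: "'f::field kstate"
  assumes "K i \<subseteq> prefix_span k"
  shows "rank K i \<le> k"
proof -
  have "rank K i \<le> card (unitv ` {1..k} :: 'f cvec set)"
    unfolding rank_def using knows_subset_prefix_span[of K i k, OF assms]
    by (intro V.dim_le_card) (auto simp: prefix_span_def)
  also have "\<dots> \<le> k"
    using card_image_le[of "{1..k}" "unitv :: nat \<Rightarrow> 'f cvec"] by simp
  finally show ?thesis .
qed

lemma rank_mono_if_prefix_span:
  assumes "K i \<subseteq> K' j" "K' j \<subseteq> prefix_span k"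
  shows "rank K i \<le> rank K' j"
proof -
  have "knows K i \<subseteq> knows K' j"
    unfolding knows_def using assms(1) by (rule V.span_mono)
  moreover have "knows K' j \<subseteq> V.span (unitv ` {1..k})"
    using knows_subset_prefix_span[of K' j k, OF assms(2)] unfolding prefix_span_def .
  ultimately show ?thesis
    unfolding rank_def by (rule V.dim_mono_finite_span) simp
qed

lemma decoded_if_full_rank:
  fixes K :: "'f::field kstate"
  assumes "K i \<subseteq> prefix_span k" "rank K i = k"
  shows "{1..k} \<subseteq> decoded K i"
proof -
  have "knows K i \<subseteq> V.span (unitv ` {1..k})"
    using knows_subset_prefix_span[of K i k, OF assms(1)] unfolding prefix_span_def .
  moreover have "card (unitv ` {1..k} :: 'f cvec set) \<le> V.dim (knows K i)"
    using card_image_le[of "{1..k}" "unitv :: nat \<Rightarrow> 'f cvec"] assms(2) unfolding rank_def by simp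
  ultimately have "unitv ` {1..k} \<subseteq> V.span (knows K i)"
    using V.subset_span_if_card_le_dim by blast
  then show ?thesis
    unfolding decoded_def knows_def V.span_span by auto
qed

lemma tx_choices_in_prefix_span:
  assumes "\<forall>i. K i \<subseteq> prefix_span (maxrank K + 1)" "Some v \<in> tx_choices K (l, n, d) A"
  shows "v \<in> prefix_span (maxrank K + 1)"
proof -
  have "{1..maxrank K + 1} \<union> heard K n \<union> heard K d = {1..maxrank K + 1}"
    using heard_subset_if_prefix_span assms(1) by blast
  then show ?thesis
    using tx_choices_in_span[OF assms(2)] unfolding prefix_span_def by simp
qed

lemma maxrank_le_if_prefix_span: "\<forall>i. K i \<subseteq> prefix_span k \<Longrightarrow> maxrank K \<le> k"
  using maxrank_attained[of K] rank_le_if_prefix_span by metis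

lemma maxrank_mono_if_prefix_span:
  assumes "\<forall>i. K i \<subseteq> K' i" "\<forall>i. K' i \<subseteq> prefix_span k"
  shows "maxrank K \<le> maxrank K'"
proof -
  obtain i where i: "i \<in> {1, 2, 3}" "rank K i = maxrank K"
    using maxrank_attained by blast
  then have "maxrank K \<le> rank K' i"
    using rank_mono_if_prefix_span assms by metis
  also have "\<dots> \<le> maxrank K'"
    using rank_le_maxrank[OF i(1)] .
  finally show ?thesis .
qed

definition decoding_invariant :: "'f::field kstate \<Rightarrow> bool" where
  "decoding_invariant K \<longleftrightarrow>
    (\<forall>i. K i \<subseteq> prefix_span (maxrank K + 1)) \<and> (\<exists>i\<in>{1, 2, 3}. {1..maxrank K} \<subseteq> decoded K i)"

lemma decoding_invariant_empty: "decoding_invariant ((\<lambda>i. {}) :: 'f::field kstate)"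
proof -
  have "maxrank ((\<lambda>i. {}) :: 'f kstate) = 0"
    using maxrank_le_if_prefix_span[of "\<lambda>i. {}" 0] by simp
  then show ?thesis
    unfolding decoding_invariant_def by auto
qed

lemma decoding_invariant_step:
  assumes inv: "decoding_invariant K" and x: "x \<in> tx_choices K lab A"
    and K': "K' = (\<lambda>i. if rcv i then K i \<union> set_option x else K i)"
  shows "decoding_invariant K'"
proof -
  obtain l n d where lab: "lab = (l, n, d)"
    by (cases lab)
  define k where "k = maxrank K + 1"
  have "set_option x \<subseteq> prefix_span k"
    using tx_choices_in_prefix_span inv x unfolding lab decoding_invariant_def k_def by (cases x) auto
  then have within: "\<forall>i. K' i \<subseteq> prefix_span k"
    using inv unfolding K' decoding_invariant_def k_def by auto
  have grow: "\<forall>i. K i \<subseteq> K' i"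
    unfolding K' by auto
  have "maxrank K \<le> maxrank K'" "maxrank K' \<le> k"
    using maxrank_mono_if_prefix_span[OF grow within] maxrank_le_if_prefix_span[OF within] .
  then consider "maxrank K' = maxrank K" | "maxrank K' = k"
    unfolding k_def by linarith
  then show ?thesis
  proof cases
    case 1
    obtain i where "i \<in> {1, 2, 3}" "{1..maxrank K} \<subseteq> decoded K i"
      using inv unfolding decoding_invariant_def by blast
    moreover have "decoded K i \<subseteq> decoded K' i"
      using grow decoded_mono by blast
    ultimately show ?thesis
      using within 1 unfolding decoding_invariant_def k_def by auto
  next
    case 2
    obtain i where "i \<in> {1, 2, 3}" "rank K' i = maxrank K'"
      using maxrank_attained by blast
    then have "{1..maxrank K'} \<subseteq> decoded K' i"
      using decoded_if_full_rank within 2 by metis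
    moreover have "\<forall>j. K' j \<subseteq> prefix_span (maxrank K' + 1)"
      using within prefix_span_mono[of k "k + 1"] 2 by auto
    ultimately show ?thesis
      using \<open>i \<in> {1, 2, 3}\<close> unfolding decoding_invariant_def by blast
  qed
qed

theorem theorem11:
  fixes arr :: "nat \<Rightarrow> nat"
    and rcv :: "nat \<Rightarrow> nat \<Rightarrow> bool"
    and s :: "nat \<Rightarrow> ('f::{field, finite}) kstate \<times> labels"
    and t :: nat
  assumes "card (UNIV :: 'f set) = 3"
    and "mono arr"
    and "s 0 = ((\<lambda>i. {}), (1, 2, 3))"
    and "\<forall>k. step (arr k) (rcv k) (s k) (s (Suc k))"
    and "t > 0"
  shows "\<exists>i\<in>{1, 2, 3}. {1..maxrank (fst (s t))} \<subseteq> decoded (fst (s t)) i"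
proof -
  have "decoding_invariant (fst (s k))" for k
  proof (induction k)
    case 0
    show ?case
      using assms(3) decoding_invariant_empty by simp
  next
    case (Suc k)
    obtain x where "x \<in> tx_choices (fst (s k)) (snd (s k)) (arr k)"
      and "fst (s (Suc k)) = (\<lambda>i. if rcv k i then fst (s k) i \<union> set_option x else fst (s k) i)"
      using assms(4) unfolding step_def by blast
    then show ?case
      using decoding_invariant_step[OF Suc.IH] by blast
  qed
  then show ?thesis
    unfolding decoding_invariant_def by blast
qed

end
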